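(* Let $n\geq 3$, let $\mathrm{D}_{2n}=\langle a,b\mid a^n=b^2=1,\ b^{-1}ab=a^{-1}\rangle$, let $\Gamma=\mathrm{Cay}(\mathrm{D}_{2n},S)$ be a Cayley digraph of $\mathrm{D}_{2n}$, and let $A=\mathrm{Aut}(\Gamma)$. Suppose $A$ has a subgroup $R$ which is regular on the vertex set of $\Gamma$ and isomorphic to $\mathrm{D}_{2n}$. Then $R$ and $R(\mathrm{D}_{2n})$ are conjugate in $A$ if and only if the unique cyclic subgroup of order $n$ in $R$ is conjugate in $A$ to $\langle R(a)\rangle$.
   Context: For a group $G$ and a subset $S\subseteq G$ with $1\notin S$, the Cayley digraph $\mathrm{Cay}(G,S)$ has vertex set $G$ and arc set $\{(g,sg)\mid g\in G,\ s\in S\}$. For $g\in G$, $R(g)$ denotes the right multiplication $x\mapsto xg$ on $G$, which is an automorphism of $\mathrm{Cay}(G,S)$; $R(G)=\{R(g)\mid g\in G\}$ is the right regular representation. A subgroup of $\mathrm{Aut}(\Gamma)$ is regular if it acts transitively on the vertices with trivial vertex stabilizers. *)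

theory Defs
  imports "HOL-Algebra.Algebra"
begin

text \<open>Dihedral group of order 2n: the pair (i, s) encodes a^i b^s with 0 <= i < n,
  where s = True means the factor b is present. Multiplication:
  a^i b^s a^j b^t = a^(i + (if s then -j else j)) b^(s xor t).\<close>
definition dihedral :: "nat \<Rightarrow> (nat \<times> bool) monoid" where
  "dihedral n = \<lparr>carrier = {0..<n} \<times> UNIV,
     monoid.mult = (\<lambda>(i, s) (j, t). ((if s then i + n - j else i + j) mod n, s \<noteq> t)),
     monoid.one = (0, False)\<rparr>"

definition dih_a :: "nat \<Rightarrow> nat \<times> bool" where "dih_a n = (1 mod n, False)"
definition dih_b :: "nat \<times> bool" where "dih_b = (0, True)"

definition cay_arc :: "('a, 'b) monoid_scheme \<Rightarrow> 'a set \<Rightarrow> 'a \<Rightarrow> 'a \<Rightarrow> bool" where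
  "cay_arc G S x y \<longleftrightarrow> x \<in> carrier G \<and> y \<in> carrier G \<and> (\<exists>s\<in>S. y = s \<otimes>\<^bsub>G\<^esub> x)"

definition cay_aut_group :: "('a, 'b) monoid_scheme \<Rightarrow> 'a set \<Rightarrow> ('a \<Rightarrow> 'a) monoid" where
  "cay_aut_group G S = BijGroup (carrier G) \<lparr>carrier :=
     {f \<in> Bij (carrier G). \<forall>x\<in>carrier G. \<forall>y\<in>carrier G.
         cay_arc G S x y \<longleftrightarrow> cay_arc G S (f x) (f y)}\<rparr>"

definition right_mult :: "('a, 'b) monoid_scheme \<Rightarrow> 'a \<Rightarrow> ('a \<Rightarrow> 'a)" where
  "right_mult G g = (\<lambda>x\<in>carrier G. x \<otimes>\<^bsub>G\<^esub> g)"

definition right_reg :: "('a, 'b) monoid_scheme \<Rightarrow> ('a \<Rightarrow> 'a) set" where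
  "right_reg G = right_mult G ` carrier G"

definition regular_on :: "('c \<Rightarrow> 'c) monoid \<Rightarrow> 'c set \<Rightarrow> ('c \<Rightarrow> 'c) set \<Rightarrow> bool" where
  "regular_on A V R \<longleftrightarrow> subgroup R A \<and>
     (\<forall>x\<in>V. \<forall>y\<in>V. \<exists>r\<in>R. r x = y) \<and>
     (\<forall>x\<in>V. \<forall>r\<in>R. r x = x \<longrightarrow> r = \<one>\<^bsub>A\<^esub>)"

definition conjugate_in :: "('c, 'd) monoid_scheme \<Rightarrow> 'c set \<Rightarrow> 'c set \<Rightarrow> bool" where
  "conjugate_in A H K \<longleftrightarrow>
     (\<exists>\<sigma>\<in>carrier A. (\<lambda>h. \<sigma> \<otimes>\<^bsub>A\<^esub> h \<otimes>\<^bsub>A\<^esub> inv\<^bsub>A\<^esub> \<sigma>) ` H = K)"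

end

(* If sigma R sigma^-1 = R(D_2n), a generator c of C goes to some R(g); g cannot be a reflection,
   for then c would be an involution although C has order n >= 3.  So sigma C sigma^-1 lies in the
   rotation group <R(a)>, and equals it by counting.

   Conversely, let sigma C sigma^-1 = <R(a)> and K = sigma R sigma^-1.  As R is dihedral and C is its
   cyclic subgroup of order n, every element of K outside <R(a)> is an involution.  K is transitive,
   so some r in K maps 1 to b; both r and r R(a) are involutions, i.e. r inverts R(a), whence
   r(v a) = r(v) a^-1 and by induction r(a^i) = b a^-i = a^i b, so r = R(b).  Thus K contains
   <R(a), R(b)> = R(D_2n), and the two coincide because both have order 2n. *)

theory Submission
  imports Defs
begin

definition dihedral_rotations :: "nat \<Rightarrow> (nat \<times> bool) set" where
  "dihedral_rotations n = {0..<n} \<times> {False}"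

lemma carrier_dihedral: "carrier (dihedral n) = {0..<n} \<times> UNIV"
  by (simp add: dihedral_def)

lemma one_dihedral: "\<one>\<^bsub>dihedral n\<^esub> = (0, False)"
  by (simp add: dihedral_def)

lemma dihedral_mult:
  "(i, s) \<otimes>\<^bsub>dihedral n\<^esub> (j, t) = ((if s then i + n - j else i + j) mod n, s \<noteq> t)"
  by (simp add: dihedral_def)

lemma snd_dihedral_mult: "snd (x \<otimes>\<^bsub>dihedral n\<^esub> y) = (snd x \<noteq> snd y)"
  by (cases x, cases y) (simp add: dihedral_mult)

(* In the integers the truncated difference i + n - j of the definition becomes (i - j) mod n,
   which makes associativity a matter of modular arithmetic. *)
lemma of_nat_fst_dihedral_mult:
  assumes "y \<in> carrier (dihedral n)"
  shows "int (fst (x \<otimes>\<^bsub>dihedral n\<^esub> y))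
    = (int (fst x) + (if snd x then - int (fst y) else int (fst y))) mod int n"
proof -
  obtain i s j t where "x = (i, s)" "y = (j, t)" "j < n"
    using assms by (cases x, cases y) (auto simp: carrier_dihedral)
  moreover have "(int i + int n - int j) mod int n = (int i - int j) mod int n"
    by (metis diff_add_eq mod_add_self2)
  ultimately show ?thesis
    by (simp add: dihedral_mult zmod_int)
qed

lemma group_dihedral:
  assumes "0 < n"
  shows "group (dihedral n)"
proof (rule groupI)
  fix x y z
  assume xyz: "x \<in> carrier (dihedral n)" "y \<in> carrier (dihedral n)" "z \<in> carrier (dihedral n)"
  have closed: "y \<otimes>\<^bsub>dihedral n\<^esub> z \<in> carrier (dihedral n)"
    using xyz assms by (cases y, cases z) (auto simp: carrier_dihedral dihedral_mult)
  have "int (fst (x \<otimes>\<^bsub>dihedral n\<^esub> y \<otimes>\<^bsub>dihedral n\<^esub> z))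
      = int (fst (x \<otimes>\<^bsub>dihedral n\<^esub> (y \<otimes>\<^bsub>dihedral n\<^esub> z)))"
    unfolding of_nat_fst_dihedral_mult[OF xyz(3)] of_nat_fst_dihedral_mult[OF closed]
      of_nat_fst_dihedral_mult[OF xyz(2)] snd_dihedral_mult
    by (cases "snd x"; cases "snd y")
      (simp_all add: mod_add_left_eq mod_add_right_eq mod_diff_left_eq mod_diff_right_eq algebra_simps)
  then show "x \<otimes>\<^bsub>dihedral n\<^esub> y \<otimes>\<^bsub>dihedral n\<^esub> z = x \<otimes>\<^bsub>dihedral n\<^esub> (y \<otimes>\<^bsub>dihedral n\<^esub> z)"
    by (auto simp: prod_eq_iff snd_dihedral_mult)
next
  fix x
  assume "x \<in> carrier (dihedral n)"
  then obtain i s where x: "x = (i, s)" "i < n"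
    by (auto simp: carrier_dihedral)
  show "\<exists>y\<in>carrier (dihedral n). y \<otimes>\<^bsub>dihedral n\<^esub> x = \<one>\<^bsub>dihedral n\<^esub>"
  proof (cases s)
    case True
    then show ?thesis
      using x by (intro bexI[of _ x]) (auto simp: dihedral_mult one_dihedral carrier_dihedral)
  next
    case False
    have "((n - i) mod n + i) mod n = 0"
      using x by (simp add: mod_add_left_eq)
    then show ?thesis
      using x False assms
      by (intro bexI[of _ "((n - i) mod n, False)"]) (simp_all add: dihedral_mult one_dihedral carrier_dihedral)
  qed
qed (use assms in \<open>auto simp: carrier_dihedral one_dihedral dihedral_mult\<close>)

lemma dihedral_reflection_square:
  assumes "x \<in> carrier (dihedral n)" and "snd x"
  shows "x \<otimes>\<^bsub>dihedral n\<^esub> x = \<one>\<^bsub>dihedral n\<^esub>"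
  using assms by (cases x) (auto simp: dihedral_mult one_dihedral carrier_dihedral)

lemma subgroup_dihedral_rotations:
  assumes "0 < n"
  shows "subgroup (dihedral_rotations n) (dihedral n)"
proof (rule group.subgroupI[OF group_dihedral[OF assms]])
  fix x
  assume x: "x \<in> dihedral_rotations n"
  have "inv\<^bsub>dihedral n\<^esub> x \<otimes>\<^bsub>dihedral n\<^esub> x = \<one>\<^bsub>dihedral n\<^esub>"
    "inv\<^bsub>dihedral n\<^esub> x \<in> carrier (dihedral n)"
    using x group.l_inv[OF group_dihedral[OF assms]] group.inv_closed[OF group_dihedral[OF assms]]
    by (auto simp: dihedral_rotations_def carrier_dihedral)
  then show "inv\<^bsub>dihedral n\<^esub> x \<in> dihedral_rotations n"
    using x snd_dihedral_mult[where x = "inv\<^bsub>dihedral n\<^esub> x" and n = n and y = x]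
    by (auto simp: dihedral_rotations_def carrier_dihedral one_dihedral)
qed (use assms in \<open>auto simp: dihedral_rotations_def carrier_dihedral dihedral_mult\<close>)

lemma card_dihedral_rotations: "card (dihedral_rotations n) = n"
  by (simp add: dihedral_rotations_def card_cartesian_product)

lemma dihedral_rotations_subset: "dihedral_rotations n \<subseteq> carrier (dihedral n)"
  by (auto simp: dihedral_rotations_def carrier_dihedral)

lemma (in group) card_generate_involution:
  assumes "c \<in> carrier G" and "c \<otimes> c = \<one>"
  shows "card (generate G {c}) \<le> 2"
proof -
  have "generate G {c} \<subseteq> {\<one>, c}"
    using assms by (intro generate_subgroup_incl subgroupI) (auto simp: inv_equality)
  then have "card (generate G {c}) \<le> card {\<one>, c}"
    by (simp add: card_mono)
  also have "\<dots> \<le> 2"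
    by (simp add: card_insert_le_m1)
  finally show ?thesis .
qed

lemma (in group) generate_eq_subgroup_of_card:
  assumes "subgroup K G" "finite K" "c \<in> K" "card (generate G {c}) = card K"
  shows "generate G {c} = K"
  using assms by (intro card_subset_eq generate_subgroup_incl) auto

lemma (in group) conjugation_group_hom:
  assumes "g \<in> carrier G"
  shows "group_hom G G (\<lambda>h. g \<otimes> h \<otimes> inv g)"
proof -
  have "g \<otimes> (x \<otimes> y) \<otimes> inv g = g \<otimes> x \<otimes> inv g \<otimes> (g \<otimes> y \<otimes> inv g)"
    if "x \<in> carrier G" "y \<in> carrier G" for x y
    using assms that by (simp add: m_assoc) (simp add: m_assoc[symmetric])
  then show ?thesis
    using assms by (intro group_hom.intro group_hom_axioms.intro is_group homI) auto
qed

lemma (in group) involution_outside_cyclic_of_dihedral: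
  assumes R: "subgroup R G" and \<phi>: "\<phi> \<in> iso (G\<lparr>carrier := R\<rparr>) (dihedral n)" and "3 \<le> n"
    and c: "c \<in> R" "card (generate G {c}) = n" and y: "y \<in> R" "y \<notin> generate G {c}"
  shows "y \<otimes> y = \<one>"
proof -
  interpret D: group "dihedral n"
    using group_dihedral \<open>3 \<le> n\<close> by simp
  interpret H: group "G\<lparr>carrier := R\<rparr>"
    using subgroup_imp_group[OF R] .
  interpret \<phi>: group_hom "G\<lparr>carrier := R\<rparr>" "dihedral n" \<phi>
    using \<phi> by (intro group_hom.intro group_hom_axioms.intro) (auto simp: iso_def)
  have inj: "inj_on \<phi> R" and onto: "\<phi> ` R = carrier (dihedral n)"
    using \<phi> by (auto simp: iso_def bij_betw_def)
  have C: "generate G {c} = generate (G\<lparr>carrier := R\<rparr>) {c}" "generate G {c} \<subseteq> R"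
    using c(1) generate_consistent[OF _ R] H.generate_in_carrier[of "{c}"] by auto
  have involution_if_reflection: "z \<otimes> z = \<one>" if z: "z \<in> R" "snd (\<phi> z)" for z
  proof -
    have "\<phi> (z \<otimes> z) = \<phi> \<one>"
      using z \<phi>.hom_mult[of z z] \<phi>.hom_one dihedral_reflection_square[OF \<phi>.hom_closed] by simp
    then show ?thesis
      using z inj subgroup.m_closed[OF R] subgroup.one_closed[OF R] by (auto dest: inj_onD)
  qed
  have "c \<otimes> c \<noteq> \<one>"
    using card_generate_involution[of c] c \<open>3 \<le> n\<close> subgroup.mem_carrier[OF R] by fastforce
  then have "\<phi> c \<in> dihedral_rotations n"
    using involution_if_reflection c(1) \<phi>.hom_closed[of c]
    by (auto simp: dihedral_rotations_def carrier_dihedral)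
  moreover have "\<phi> ` generate G {c} = generate (dihedral n) {\<phi> c}"
    using c(1) \<phi>.generate_img[of "{c}"] C(1) by simp
  moreover have "card (\<phi> ` generate G {c}) = n"
    using c(2) inj C(2) by (simp add: card_image inj_on_subset)
  ultimately have "\<phi> ` generate G {c} = dihedral_rotations n"
    using D.generate_eq_subgroup_of_card[OF subgroup_dihedral_rotations] \<open>3 \<le> n\<close>
    by (simp add: dihedral_rotations_def card_dihedral_rotations)
  then have "\<phi> y \<notin> dihedral_rotations n"
    using y inj C(2) by (metis inj_on_image_mem_iff)
  then have "snd (\<phi> y)"
    using y(1) \<phi>.hom_closed[of y] by (auto simp: dihedral_rotations_def carrier_dihedral)
  then show ?thesis
    using involution_if_reflection y(1) by blast
qed

lemma carrier_cay_aut_group: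
  "carrier (cay_aut_group G S) = {f \<in> Bij (carrier G). \<forall>x\<in>carrier G. \<forall>y\<in>carrier G.
     cay_arc G S x y \<longleftrightarrow> cay_arc G S (f x) (f y)}"
  by (simp add: cay_aut_group_def BijGroup_def)

lemma cay_aut_group_mult_apply:
  assumes "f \<in> carrier (cay_aut_group G S)" "g \<in> carrier (cay_aut_group G S)" "x \<in> carrier G"
  shows "(f \<otimes>\<^bsub>cay_aut_group G S\<^esub> g) x = f (g x)"
  using assms by (simp add: cay_aut_group_def BijGroup_def compose_def)

lemma cay_aut_group_one_apply: "x \<in> carrier G \<Longrightarrow> \<one>\<^bsub>cay_aut_group G S\<^esub> x = x"
  by (simp add: cay_aut_group_def BijGroup_def)

lemma cay_aut_group_closed:
  "f \<in> carrier (cay_aut_group G S) \<Longrightarrow> x \<in> carrier G \<Longrightarrow> f x \<in> carrier G"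
  by (auto simp: carrier_cay_aut_group Bij_def bij_betw_def)

lemma cay_aut_group_eqI:
  assumes "f \<in> carrier (cay_aut_group G S)" "g \<in> carrier (cay_aut_group G S)"
    and "\<And>x. x \<in> carrier G \<Longrightarrow> f x = g x"
  shows "f = g"
  using assms by (auto simp: carrier_cay_aut_group Bij_def intro: extensionalityI)

lemma subgroup_cay_aut_group:
  "subgroup (carrier (cay_aut_group G S)) (BijGroup (carrier G))"
proof (rule group.subgroupI[OF group_BijGroup])
  fix f
  assume f: "f \<in> carrier (cay_aut_group G S)"
  let ?g = "inv\<^bsub>BijGroup (carrier G)\<^esub> f"
  have f_Bij: "f \<in> Bij (carrier G)" and bij: "bij_betw f (carrier G) (carrier G)"
    using f by (auto simp: carrier_cay_aut_group Bij_def)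
  have g: "?g \<in> Bij (carrier G)" "\<And>x. x \<in> carrier G \<Longrightarrow> ?g x \<in> carrier G \<and> f (?g x) = x"
    using bij by (auto simp: inv_BijGroup[OF f_Bij] restrict_inv_into_Bij[OF f_Bij]
        bij_betw_def inv_into_into f_inv_into_f)
  show "?g \<in> carrier (cay_aut_group G S)"
    using f g by (auto simp: carrier_cay_aut_group)
next
  fix f g
  assume f: "f \<in> carrier (cay_aut_group G S)" and g: "g \<in> carrier (cay_aut_group G S)"
  have "cay_arc G S x y \<longleftrightarrow> cay_arc G S (f (g x)) (f (g y))"
    if "x \<in> carrier G" "y \<in> carrier G" for x y
    using f g that cay_aut_group_closed[OF g] by (simp add: carrier_cay_aut_group)
  moreover have "f \<in> Bij (carrier G)" "g \<in> Bij (carrier G)"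
    using f g by (simp_all add: carrier_cay_aut_group)
  ultimately show "f \<otimes>\<^bsub>BijGroup (carrier G)\<^esub> g \<in> carrier (cay_aut_group G S)"
    unfolding carrier_cay_aut_group
    using compose_Bij[of f "carrier G" g] by (simp add: BijGroup_def compose_def)
qed (auto simp: carrier_cay_aut_group BijGroup_def intro!: exI[of _ "\<lambda>x\<in>carrier G. x"] id_Bij)

lemma group_cay_aut_group: "group (cay_aut_group G S)"
proof -
  have "cay_aut_group G S = (BijGroup (carrier G))\<lparr>carrier := carrier (cay_aut_group G S)\<rparr>"
    by (simp add: cay_aut_group_def BijGroup_def)
  then show ?thesis
    using subgroup.subgroup_is_group[OF subgroup_cay_aut_group group_BijGroup] by metis
qed

lemma (in group) right_mult_in_cay_aut_group:
  assumes "S \<subseteq> carrier G" and "g \<in> carrier G"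
  shows "right_mult G g \<in> carrier (cay_aut_group G S)"
proof -
  have "bij_betw (right_mult G g) (carrier G) (carrier G)"
    using assms by (intro bij_betwI[where g = "right_mult G (inv g)"]) (auto simp: right_mult_def m_assoc)
  moreover have "cay_arc G S x y \<longleftrightarrow> cay_arc G S (x \<otimes> g) (y \<otimes> g)"
    if "x \<in> carrier G" "y \<in> carrier G" for x y
  proof -
    have "y \<otimes> g = s \<otimes> (x \<otimes> g) \<longleftrightarrow> y = s \<otimes> x" if "s \<in> S" for s
      using assms that \<open>x \<in> carrier G\<close> \<open>y \<in> carrier G\<close> by (auto simp: m_assoc[symmetric])
    then show ?thesis
      using that assms by (auto simp: cay_arc_def)
  qed
  ultimately show ?thesis
    by (auto simp: carrier_cay_aut_group Bij_def right_mult_def)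
qed

lemma (in group) right_mult_mult:
  assumes "S \<subseteq> carrier G" "g \<in> carrier G" "h \<in> carrier G"
  shows "right_mult G g \<otimes>\<^bsub>cay_aut_group G S\<^esub> right_mult G h = right_mult G (h \<otimes> g)"
proof -
  interpret A: group "cay_aut_group G S"
    by (rule group_cay_aut_group)
  have in_A: "right_mult G k \<in> carrier (cay_aut_group G S)" if "k \<in> carrier G" for k
    using right_mult_in_cay_aut_group[OF assms(1) that] .
  show ?thesis
  proof (rule cay_aut_group_eqI[where S = S])
    fix x
    assume x: "x \<in> carrier G"
    then have "(right_mult G g \<otimes>\<^bsub>cay_aut_group G S\<^esub> right_mult G h) x = right_mult G g (right_mult G h x)"
      using assms in_A by (intro cay_aut_group_mult_apply) simp_all
    then show "(right_mult G g \<otimes>\<^bsub>cay_aut_group G S\<^esub> right_mult G h) x = right_mult G (h \<otimes> g) x"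
      using assms x by (simp add: right_mult_def m_assoc)
  qed (use assms in_A in simp_all)
qed

lemma (in group) right_mult_one: "right_mult G \<one> = \<one>\<^bsub>cay_aut_group G S\<^esub>"
  unfolding right_mult_def by (simp add: cay_aut_group_def BijGroup_def cong: restrict_cong)

lemma (in group) inj_on_right_mult: "inj_on (right_mult G) (carrier G)"
proof (rule inj_onI)
  fix g h
  assume "g \<in> carrier G" "h \<in> carrier G" "right_mult G g = right_mult G h"
  then have "right_mult G g \<one> = right_mult G h \<one>"
    by simp
  then show "g = h"
    using \<open>g \<in> carrier G\<close> \<open>h \<in> carrier G\<close> by (simp add: right_mult_def)
qed

lemma (in group) card_right_reg: "card (right_reg G) = card (carrier G)"
  by (simp add: right_reg_def card_image inj_on_right_mult)

lemma cay_aut_group_conjugation_apply: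
  assumes "\<sigma> \<in> carrier (cay_aut_group G S)" "y \<in> carrier (cay_aut_group G S)" "v \<in> carrier G"
  shows "(\<sigma> \<otimes>\<^bsub>cay_aut_group G S\<^esub> y \<otimes>\<^bsub>cay_aut_group G S\<^esub> inv\<^bsub>cay_aut_group G S\<^esub> \<sigma>) v
    = \<sigma> (y ((inv\<^bsub>cay_aut_group G S\<^esub> \<sigma>) v))"
proof -
  have closed: "\<sigma> \<otimes>\<^bsub>cay_aut_group G S\<^esub> y \<in> carrier (cay_aut_group G S)"
    "inv\<^bsub>cay_aut_group G S\<^esub> \<sigma> \<in> carrier (cay_aut_group G S)"
    using assms group_cay_aut_group by (auto intro: monoid.m_closed group.is_monoid group.inv_closed)
  have "(\<sigma> \<otimes>\<^bsub>cay_aut_group G S\<^esub> y \<otimes>\<^bsub>cay_aut_group G S\<^esub> inv\<^bsub>cay_aut_group G S\<^esub> \<sigma>) v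
      = (\<sigma> \<otimes>\<^bsub>cay_aut_group G S\<^esub> y) ((inv\<^bsub>cay_aut_group G S\<^esub> \<sigma>) v)"
    by (rule cay_aut_group_mult_apply[OF closed assms(3)])
  also have "\<dots> = \<sigma> (y ((inv\<^bsub>cay_aut_group G S\<^esub> \<sigma>) v))"
    by (rule cay_aut_group_mult_apply[OF assms(1,2) cay_aut_group_closed[OF closed(2) assms(3)]])
  finally show ?thesis .
qed

lemma cay_aut_group_apply_inv:
  assumes "\<sigma> \<in> carrier (cay_aut_group G S)" "v \<in> carrier G"
  shows "\<sigma> ((inv\<^bsub>cay_aut_group G S\<^esub> \<sigma>) v) = v"
proof -
  have inv: "inv\<^bsub>cay_aut_group G S\<^esub> \<sigma> \<in> carrier (cay_aut_group G S)"
    using assms(1) by (rule group.inv_closed[OF group_cay_aut_group])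
  have "\<sigma> ((inv\<^bsub>cay_aut_group G S\<^esub> \<sigma>) v)
      = (\<sigma> \<otimes>\<^bsub>cay_aut_group G S\<^esub> inv\<^bsub>cay_aut_group G S\<^esub> \<sigma>) v"
    by (rule cay_aut_group_mult_apply[OF assms(1) inv assms(2), symmetric])
  also have "\<dots> = v"
    using group.r_inv[OF group_cay_aut_group assms(1)] cay_aut_group_one_apply[OF assms(2)] by simp
  finally show ?thesis .
qed

lemma cay_aut_group_conjugate_transitive:
  assumes \<sigma>: "\<sigma> \<in> carrier (cay_aut_group G S)" and R: "R \<subseteq> carrier (cay_aut_group G S)"
    and transitive: "\<forall>u\<in>carrier G. \<forall>v\<in>carrier G. \<exists>x\<in>R. x u = v"
    and u: "u \<in> carrier G" and v: "v \<in> carrier G"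
  shows "\<exists>r\<in>(\<lambda>h. \<sigma> \<otimes>\<^bsub>cay_aut_group G S\<^esub> h \<otimes>\<^bsub>cay_aut_group G S\<^esub> inv\<^bsub>cay_aut_group G S\<^esub> \<sigma>) ` R. r u = v"
proof -
  have "inv\<^bsub>cay_aut_group G S\<^esub> \<sigma> \<in> carrier (cay_aut_group G S)"
    using \<sigma> by (rule group.inv_closed[OF group_cay_aut_group])
  then obtain x where x: "x \<in> R" "x ((inv\<^bsub>cay_aut_group G S\<^esub> \<sigma>) u) = (inv\<^bsub>cay_aut_group G S\<^esub> \<sigma>) v"
    using transitive cay_aut_group_closed[OF _ u] cay_aut_group_closed[OF _ v] by meson
  then have "(\<sigma> \<otimes>\<^bsub>cay_aut_group G S\<^esub> x \<otimes>\<^bsub>cay_aut_group G S\<^esub> inv\<^bsub>cay_aut_group G S\<^esub> \<sigma>) u = v"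
    using cay_aut_group_conjugation_apply[OF \<sigma> subsetD[OF R x(1)] u] cay_aut_group_apply_inv[OF \<sigma> v]
    by simp
  then show ?thesis
    using x(1) by blast
qed

lemma (in group) right_mult_inv:
  assumes "S \<subseteq> carrier G" "g \<in> carrier G"
  shows "inv\<^bsub>cay_aut_group G S\<^esub> (right_mult G g) = right_mult G (inv g)"
  using assms right_mult_mult[OF assms(1)] right_mult_one[of S] right_mult_in_cay_aut_group[OF assms(1)]
  by (intro group.inv_equality[OF group_cay_aut_group]) auto

lemma (in group) subgroup_right_mult_image:
  assumes "S \<subseteq> carrier G" "subgroup K G"
  shows "subgroup (right_mult G ` K) (cay_aut_group G S)"
  using assms subgroup.mem_carrier[OF assms(2)] subgroup.m_inv_closed[OF assms(2)]
    subgroup.m_closed[OF assms(2)] subgroup.one_closed[OF assms(2)]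
  by (intro group.subgroupI[OF group_cay_aut_group])
    (auto simp: right_mult_in_cay_aut_group right_mult_inv right_mult_mult)

locale dihedral_cayley =
  fixes n :: nat and S :: "(nat \<times> bool) set"
  assumes three_le_n: "3 \<le> n" and S_subset: "S \<subseteq> carrier (dihedral n)"
begin

abbreviation "D \<equiv> dihedral n"
abbreviation "A \<equiv> cay_aut_group D S"
abbreviation "\<rho> \<equiv> right_mult D"

sublocale D: group D
  using group_dihedral three_le_n by simp

sublocale A: group A
  by (rule group_cay_aut_group)

definition right_rotations :: "(nat \<times> bool \<Rightarrow> nat \<times> bool) set" where
  "right_rotations = \<rho> ` dihedral_rotations n"

lemma dih_a_eq: "dih_a n = (1, False)"
  using three_le_n by (simp add: dih_a_def)

lemma dih_a_in_carrier: "dih_a n \<in> carrier D"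
  using three_le_n by (simp add: dih_a_eq carrier_dihedral)

lemma dih_b_in_carrier: "dih_b \<in> carrier D"
  using three_le_n by (simp add: dih_b_def carrier_dihedral)

lemma inv_dih_a: "inv\<^bsub>D\<^esub> (dih_a n) = (n - 1, False)"
  using three_le_n dih_a_in_carrier
  by (intro D.inv_equality) (auto simp: dih_a_eq dihedral_mult one_dihedral carrier_dihedral)

lemma right_mult_in_A: "g \<in> carrier D \<Longrightarrow> \<rho> g \<in> carrier A"
  by (rule D.right_mult_in_cay_aut_group[OF S_subset])

lemma right_mult_mult_A: "g \<in> carrier D \<Longrightarrow> h \<in> carrier D \<Longrightarrow> \<rho> g \<otimes>\<^bsub>A\<^esub> \<rho> h = \<rho> (h \<otimes>\<^bsub>D\<^esub> g)"
  by (rule D.right_mult_mult[OF S_subset])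

lemma subgroup_right_rotations: "subgroup right_rotations A"
  unfolding right_rotations_def
  using D.subgroup_right_mult_image[OF S_subset subgroup_dihedral_rotations] three_le_n by simp

lemma card_right_rotations: "card right_rotations = n"
  unfolding right_rotations_def
  using D.inj_on_right_mult dihedral_rotations_subset
  by (simp add: card_image inj_on_subset card_dihedral_rotations)

lemma right_rotations_apply_one:
  assumes "r \<in> right_rotations"
  shows "r (0, False) \<in> dihedral_rotations n"
  using assms three_le_n
  by (auto simp: right_rotations_def dihedral_rotations_def right_mult_def carrier_dihedral dihedral_mult)

lemma pow_right_mult_dih_a: "\<rho> (dih_a n) [^]\<^bsub>A\<^esub> (k :: nat) = \<rho> (k mod n, False)"
proof (induction k)
  case 0
  then show ?case
    using D.right_mult_one by (simp add: one_dihedral)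
next
  case (Suc k)
  have "(1, False) \<otimes>\<^bsub>D\<^esub> (k mod n, False) = (Suc k mod n, False)"
    by (simp add: dihedral_mult mod_Suc_eq)
  moreover have "(k mod n, False) \<in> carrier D"
    using three_le_n by (simp add: carrier_dihedral)
  ultimately show ?case
    using Suc dih_a_in_carrier right_mult_mult_A by (simp add: dih_a_eq)
qed

lemma generate_right_mult_dih_a: "generate A {\<rho> (dih_a n)} = right_rotations"
proof
  show "generate A {\<rho> (dih_a n)} \<subseteq> right_rotations"
    using subgroup_right_rotations three_le_n
    by (intro A.generate_subgroup_incl) (auto simp: right_rotations_def dihedral_rotations_def dih_a_eq)
  have "\<rho> (i, False) \<in> generate A {\<rho> (dih_a n)}" if "i < n" for i
  proof -
    have "\<rho> (i, False) = \<rho> (dih_a n) [^]\<^bsub>A\<^esub> int i"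
      using pow_right_mult_dih_a[of i] that by (simp add: int_pow_int)
    then show ?thesis
      using A.generate_pow[OF right_mult_in_A[OF dih_a_in_carrier]] by blast
  qed
  then show "right_rotations \<subseteq> generate A {\<rho> (dih_a n)}"
    by (auto simp: right_rotations_def dihedral_rotations_def)
qed

lemma apply_mult_dih_a_of_inverting:
  assumes r: "r \<in> carrier A"
    and rel: "r \<otimes>\<^bsub>A\<^esub> r = \<one>\<^bsub>A\<^esub>" "(r \<otimes>\<^bsub>A\<^esub> \<rho> (dih_a n)) \<otimes>\<^bsub>A\<^esub> (r \<otimes>\<^bsub>A\<^esub> \<rho> (dih_a n)) = \<one>\<^bsub>A\<^esub>"
    and v: "v \<in> carrier D"
  shows "r (v \<otimes>\<^bsub>D\<^esub> dih_a n) = r v \<otimes>\<^bsub>D\<^esub> (n - 1, False)"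
proof -
  have a: "\<rho> (dih_a n) \<in> carrier A" "\<rho> (inv\<^bsub>D\<^esub> dih_a n) \<in> carrier A"
    using right_mult_in_A dih_a_in_carrier by simp_all
  have "r \<otimes>\<^bsub>A\<^esub> \<rho> (dih_a n) = inv\<^bsub>A\<^esub> (r \<otimes>\<^bsub>A\<^esub> \<rho> (dih_a n))"
    using rel(2) r a by (simp add: A.inv_equality)
  also have "\<dots> = \<rho> (inv\<^bsub>D\<^esub> dih_a n) \<otimes>\<^bsub>A\<^esub> r"
    using rel(1) r a dih_a_in_carrier
    by (simp add: A.inv_mult_group A.inv_equality D.right_mult_inv[OF S_subset])
  finally have conj: "r \<otimes>\<^bsub>A\<^esub> \<rho> (dih_a n) = \<rho> (inv\<^bsub>D\<^esub> dih_a n) \<otimes>\<^bsub>A\<^esub> r" .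
  have "r (v \<otimes>\<^bsub>D\<^esub> dih_a n) = (r \<otimes>\<^bsub>A\<^esub> \<rho> (dih_a n)) v"
    using cay_aut_group_mult_apply[OF r a(1) v] v by (simp add: right_mult_def)
  also have "\<dots> = (\<rho> (inv\<^bsub>D\<^esub> dih_a n) \<otimes>\<^bsub>A\<^esub> r) v"
    by (simp only: conj)
  also have "\<dots> = r v \<otimes>\<^bsub>D\<^esub> (n - 1, False)"
    using cay_aut_group_mult_apply[OF a(2) r v] cay_aut_group_closed[OF r v]
    by (simp add: right_mult_def inv_dih_a)
  finally show ?thesis .
qed

lemma right_mult_dih_b_unique:
  assumes r: "r \<in> carrier A" "r (0, False) = dih_b"
    and rel: "r \<otimes>\<^bsub>A\<^esub> r = \<one>\<^bsub>A\<^esub>" "(r \<otimes>\<^bsub>A\<^esub> \<rho> (dih_a n)) \<otimes>\<^bsub>A\<^esub> (r \<otimes>\<^bsub>A\<^esub> \<rho> (dih_a n)) = \<one>\<^bsub>A\<^esub>"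
  shows "r = \<rho> dih_b"
proof -
  have rotation: "r (i, False) = (i, True)" if "i < n" for i
    using that
  proof (induction i)
    case 0
    then show ?case
      using r(2) by (simp add: dih_b_def)
  next
    case (Suc i)
    then have "(Suc i, False) = (i, False) \<otimes>\<^bsub>D\<^esub> dih_a n"
      by (simp add: dih_a_eq dihedral_mult)
    then show ?case
      using Suc apply_mult_dih_a_of_inverting[OF r(1) rel, of "(i, False)"]
      by (simp add: carrier_dihedral dihedral_mult)
  qed
  have reflection: "r (i, True) = (i, False)" if "i < n" for i
    using that rotation[OF that] cay_aut_group_mult_apply[OF r(1) r(1), of "(i, False)"] rel(1)
    by (simp add: carrier_dihedral cay_aut_group_one_apply)
  show ?thesis
  proof (rule cay_aut_group_eqI[OF r(1) right_mult_in_A[OF dih_b_in_carrier]])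
    fix v
    assume "v \<in> carrier D"
    then show "r v = \<rho> dih_b v"
      using rotation reflection
      by (cases v, cases "snd v") (auto simp: carrier_dihedral right_mult_def dih_b_def dihedral_mult)
  qed
qed

lemma right_reg_subset_subgroup:
  assumes K: "subgroup K A" and "right_rotations \<subseteq> K" and "\<rho> dih_b \<in> K"
  shows "right_reg D \<subseteq> K"
proof
  fix q
  assume "q \<in> right_reg D"
  then obtain i s where q: "q = \<rho> (i, s)" "i < n"
    by (auto simp: right_reg_def carrier_dihedral)
  have rotation: "\<rho> (i, False) \<in> K"
    using q(2) assms(2) by (auto simp: right_rotations_def dihedral_rotations_def)
  have "\<rho> (i, True) = \<rho> dih_b \<otimes>\<^bsub>A\<^esub> \<rho> (i, False)"
    using q(2) dih_b_in_carrier by (simp add: right_mult_mult_A carrier_dihedral dih_b_def dihedral_mult)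
  then have "\<rho> (i, True) \<in> K"
    using subgroup.m_closed[OF K assms(3) rotation] by simp
  then show "q \<in> K"
    using q rotation by (cases s) simp_all
qed

lemma right_mult_dih_b_in_subgroup:
  assumes K: "subgroup K A" "right_rotations \<subseteq> K"
    and involution: "\<And>z. z \<in> K \<Longrightarrow> z \<notin> right_rotations \<Longrightarrow> z \<otimes>\<^bsub>A\<^esub> z = \<one>\<^bsub>A\<^esub>"
    and r: "r \<in> K" "r (0, False) = dih_b"
  shows "\<rho> dih_b \<in> K"
proof -
  have a: "\<rho> (dih_a n) \<in> right_rotations"
    using three_le_n by (auto simp: right_rotations_def dihedral_rotations_def dih_a_eq)
  have r_A: "r \<in> carrier A" and a_A: "\<rho> (dih_a n) \<in> carrier A"
    using subgroup.mem_carrier[OF K(1) r(1)] subgroup.mem_carrier[OF subgroup_right_rotations a] by simp_all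
  have "r \<notin> right_rotations"
    using right_rotations_apply_one r(2) by (force simp: dih_b_def dihedral_rotations_def)
  moreover have "r \<otimes>\<^bsub>A\<^esub> \<rho> (dih_a n) \<notin> right_rotations"
  proof
    assume "r \<otimes>\<^bsub>A\<^esub> \<rho> (dih_a n) \<in> right_rotations"
    then have "r \<otimes>\<^bsub>A\<^esub> \<rho> (dih_a n) \<otimes>\<^bsub>A\<^esub> inv\<^bsub>A\<^esub> \<rho> (dih_a n) \<in> right_rotations"
      using a subgroup_right_rotations by (simp add: subgroup.m_closed subgroup.m_inv_closed)
    then show False
      using r_A a_A \<open>r \<notin> right_rotations\<close> by (simp add: A.m_assoc)
  qed
  ultimately have "r = \<rho> dih_b"
    using involution K a r r_A subgroup.m_closed[OF K(1)] by (intro right_mult_dih_b_unique) auto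
  then show ?thesis
    using r(1) by simp
qed

lemma conjugate_cyclic_eq_right_rotations:
  assumes \<sigma>: "\<sigma> \<in> carrier A" and c: "c \<in> carrier A" "card (generate A {c}) = n"
    and c_reg: "\<sigma> \<otimes>\<^bsub>A\<^esub> c \<otimes>\<^bsub>A\<^esub> inv\<^bsub>A\<^esub> \<sigma> \<in> right_reg D"
  shows "(\<lambda>h. \<sigma> \<otimes>\<^bsub>A\<^esub> h \<otimes>\<^bsub>A\<^esub> inv\<^bsub>A\<^esub> \<sigma>) ` generate A {c} = right_rotations"
proof -
  let ?\<kappa> = "\<lambda>h. \<sigma> \<otimes>\<^bsub>A\<^esub> h \<otimes>\<^bsub>A\<^esub> inv\<^bsub>A\<^esub> \<sigma>"
  interpret \<kappa>: group_hom A A ?\<kappa>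
    using A.conjugation_group_hom[OF \<sigma>] .
  have inj: "inj_on ?\<kappa> (carrier A)"
    using A.conjugation_is_inj[OF \<sigma>] by (auto intro: inj_onI)
  obtain g where g: "g \<in> carrier D" "?\<kappa> c = \<rho> g"
    using c_reg by (auto simp: right_reg_def)
  have "\<not> snd g"
  proof
    assume "snd g"
    have "?\<kappa> (c \<otimes>\<^bsub>A\<^esub> c) = \<rho> g \<otimes>\<^bsub>A\<^esub> \<rho> g"
      using \<kappa>.hom_mult[OF c(1) c(1)] g(2) by simp
    also have "\<dots> = \<rho> \<one>\<^bsub>D\<^esub>"
      using right_mult_mult_A[OF g(1) g(1)] dihedral_reflection_square[OF g(1) \<open>snd g\<close>] by simp
    also have "\<dots> = ?\<kappa> \<one>\<^bsub>A\<^esub>"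
      using D.right_mult_one[of S] \<kappa>.hom_one by simp
    finally have "?\<kappa> (c \<otimes>\<^bsub>A\<^esub> c) = ?\<kappa> \<one>\<^bsub>A\<^esub>" .
    then have "c \<otimes>\<^bsub>A\<^esub> c = \<one>\<^bsub>A\<^esub>"
      by (rule inj_onD[OF inj]) (simp_all add: c(1))
    then show False
      using A.card_generate_involution[OF c(1)] c(2) three_le_n by simp
  qed
  then have "?\<kappa> c \<in> right_rotations"
    using g by (auto simp: right_rotations_def dihedral_rotations_def carrier_dihedral)
  moreover have "?\<kappa> ` generate A {c} = generate A {?\<kappa> c}"
    using \<kappa>.generate_img[of "{c}"] c(1) by simp
  moreover have "card (?\<kappa> ` generate A {c}) = n"
    using c inj_on_subset[OF inj A.generate_incl[of "{c}"]] by (simp add: card_image)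
  moreover have "finite right_rotations"
    by (simp add: right_rotations_def dihedral_rotations_def)
  ultimately show ?thesis
    using A.generate_eq_subgroup_of_card[OF subgroup_right_rotations] card_right_rotations by simp
qed

lemma conjugate_regular_eq_right_reg:
  assumes reg: "regular_on A (carrier D) R" and iso: "A\<lparr>carrier := R\<rparr> \<cong> D"
    and c: "c \<in> R" "card (generate A {c}) = n" and \<sigma>: "\<sigma> \<in> carrier A"
    and conj_c: "(\<lambda>h. \<sigma> \<otimes>\<^bsub>A\<^esub> h \<otimes>\<^bsub>A\<^esub> inv\<^bsub>A\<^esub> \<sigma>) ` generate A {c} = right_rotations"
  shows "(\<lambda>h. \<sigma> \<otimes>\<^bsub>A\<^esub> h \<otimes>\<^bsub>A\<^esub> inv\<^bsub>A\<^esub> \<sigma>) ` R = right_reg D"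
proof -
  let ?\<kappa> = "\<lambda>h. \<sigma> \<otimes>\<^bsub>A\<^esub> h \<otimes>\<^bsub>A\<^esub> inv\<^bsub>A\<^esub> \<sigma>"
  interpret \<kappa>: group_hom A A ?\<kappa>
    using A.conjugation_group_hom[OF \<sigma>] .
  have R: "subgroup R A"
    using reg by (simp add: regular_on_def)
  obtain \<phi> where \<phi>: "\<phi> \<in> iso (A\<lparr>carrier := R\<rparr>) D"
    using iso by (auto simp: is_iso_def)
  have K: "subgroup (?\<kappa> ` R) A"
    using \<kappa>.subgroup_img_is_subgroup[OF R] .
  have "generate A {c} \<subseteq> R"
    using A.generate_subgroup_incl[OF _ R] c(1) by simp
  then have rotations_subset: "right_rotations \<subseteq> ?\<kappa> ` R"
    using conj_c by blast
  have involution: "z \<otimes>\<^bsub>A\<^esub> z = \<one>\<^bsub>A\<^esub>" if z: "z \<in> ?\<kappa> ` R" "z \<notin> right_rotations" for z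
  proof -
    obtain x where x: "x \<in> R" "z = ?\<kappa> x" "x \<notin> generate A {c}"
      using z conj_c by auto
    then have "x \<otimes>\<^bsub>A\<^esub> x = \<one>\<^bsub>A\<^esub>"
      using A.involution_outside_cyclic_of_dihedral[OF R \<phi> three_le_n c] by simp
    then show ?thesis
      using x \<kappa>.hom_mult[of x x] \<kappa>.hom_one subgroup.mem_carrier[OF R] by simp
  qed
  have "\<exists>r\<in>?\<kappa> ` R. r (0, False) = dih_b"
    using cay_aut_group_conjugate_transitive[OF \<sigma> subgroup.subset[OF R]] reg dih_b_in_carrier
      three_le_n by (simp add: regular_on_def carrier_dihedral)
  then have "\<rho> dih_b \<in> ?\<kappa> ` R"
    using right_mult_dih_b_in_subgroup[OF K rotations_subset involution] by blast
  then have "right_reg D \<subseteq> ?\<kappa> ` R"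
    using right_reg_subset_subgroup[OF K rotations_subset] by blast
  moreover have bij: "bij_betw \<phi> R (carrier D)"
    using \<phi> by (simp add: iso_def)
  then have "finite R" "card R = card (right_reg D)"
    using bij_betw_finite[OF bij] bij_betw_same_card[OF bij] D.card_right_reg
    by (simp_all add: carrier_dihedral)
  ultimately show ?thesis
    by (metis card_image_le card_seteq finite_imageI)
qed

end

theorem lemma4p1:
  fixes n :: nat and S :: "(nat \<times> bool) set" and R C :: "(nat \<times> bool \<Rightarrow> nat \<times> bool) set"
  assumes "n \<ge> 3"
    and "S \<subseteq> carrier (dihedral n)" and "\<one>\<^bsub>dihedral n\<^esub> \<notin> S"
    and "regular_on (cay_aut_group (dihedral n) S) (carrier (dihedral n)) R"
    and "(cay_aut_group (dihedral n) S)\<lparr>carrier := R\<rparr> \<cong> dihedral n"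
    and "C \<subseteq> R" and "subgroup C (cay_aut_group (dihedral n) S)"
    and "\<exists>c\<in>C. C = generate (cay_aut_group (dihedral n) S) {c}"
    and "card C = n"
  shows "conjugate_in (cay_aut_group (dihedral n) S) R (right_reg (dihedral n))
     \<longleftrightarrow> conjugate_in (cay_aut_group (dihedral n) S) C
           (generate (cay_aut_group (dihedral n) S) {right_mult (dihedral n) (dih_a n)})"
proof -
  interpret dihedral_cayley n S
    using assms(1,2) by unfold_locales
  obtain c where c: "c \<in> R" "C = generate A {c}"
    using assms(6,8) by blast
  have c_A: "c \<in> carrier A"
    using c(1) assms(4) by (auto simp: regular_on_def dest: subgroup.mem_carrier)
  have card_c: "card (generate A {c}) = n"
    using assms(9) c(2) by simp
  show ?thesis
    unfolding conjugate_in_def generate_right_mult_dih_a c(2)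
  proof
    assume "\<exists>\<sigma>\<in>carrier A. (\<lambda>h. \<sigma> \<otimes>\<^bsub>A\<^esub> h \<otimes>\<^bsub>A\<^esub> inv\<^bsub>A\<^esub> \<sigma>) ` R = right_reg D"
    then obtain \<sigma> where "\<sigma> \<in> carrier A" "\<sigma> \<otimes>\<^bsub>A\<^esub> c \<otimes>\<^bsub>A\<^esub> inv\<^bsub>A\<^esub> \<sigma> \<in> right_reg D"
      using c(1) by blast
    then show "\<exists>\<sigma>\<in>carrier A. (\<lambda>h. \<sigma> \<otimes>\<^bsub>A\<^esub> h \<otimes>\<^bsub>A\<^esub> inv\<^bsub>A\<^esub> \<sigma>) ` generate A {c} = right_rotations"
      using conjugate_cyclic_eq_right_rotations[OF _ c_A card_c] by blast
  next
    assume "\<exists>\<sigma>\<in>carrier A. (\<lambda>h. \<sigma> \<otimes>\<^bsub>A\<^esub> h \<otimes>\<^bsub>A\<^esub> inv\<^bsub>A\<^esub> \<sigma>) ` generate A {c} = right_rotations"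
    then show "\<exists>\<sigma>\<in>carrier A. (\<lambda>h. \<sigma> \<otimes>\<^bsub>A\<^esub> h \<otimes>\<^bsub>A\<^esub> inv\<^bsub>A\<^esub> \<sigma>) ` R = right_reg D"
      using conjugate_regular_eq_right_reg[OF assms(4,5) c(1) card_c] by blast
  qed
qed

end
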